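(* Let $(X_t)_{t\ge1}$ be independent random variables with values in $[0,1]$, defined on a probability space $(\Omega,\mathcal{F},\mathbb{P})$, with common expectation $\mu=\mathbb{E}[X_t]$. Let $(\mathcal{F}_t)_{t\ge0}$ be an increasing sequence of sub-$\sigma$-fields of $\mathcal{F}$ such that for each $t$, $\sigma(X_1,\dots,X_t)\subset\mathcal{F}_t$ and for $s>t$, $X_s$ is independent of $\mathcal{F}_t$. Let $(\epsilon_t)_{t\ge1}$ be $\{0,1\}$-valued random variables with $\epsilon_t$ $\mathcal{F}_{t-1}$-measurable for every $t\ge1$. Let $\delta>0$, let $n\ge2$ be an integer, and set \[S(n)=\sum_{s=1}^n\epsilon_sX_s,\quad N(n)=\sum_{s=1}^n\epsilon_s,\quad \hat\mu(n)=\frac{S(n)}{N(n)},\] \[u(n)=\max\{q\in[\hat\mu(n),1]:\ N(n)\,d(\hat\mu(n),q)\le\delta\},\] with the convention $u(n)=1$ when $N(n)=0$. Then \[\mathbb{P}(u(n)<\mu)\le e\lceil\delta\log(n)\rceil\exp(-\delta).\]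
   Context: $d(p,q)=p\log\frac pq+(1-p)\log\frac{1-p}{1-q}$ for $p,q\in[0,1]$ (Bernoulli Kullback–Leibler divergence), with conventions $0\log0=0\log(0/0)=0$ and $x\log(x/0)=+\infty$ for $x>0$. *)

theory Defs
  imports "HOL-Probability.Probability"
begin

text \<open>Bernoulli Kullback-Leibler divergence, extended-real valued, with the conventions
  0 log 0 = 0 log (0/0) = 0 and x log (x/0) = +infinity for x > 0.\<close>
definition xlogxy :: "real \<Rightarrow> real \<Rightarrow> ereal" where
  "xlogxy x y = (if x = 0 then 0 else if y = 0 then \<infinity> else ereal (x * ln (x / y)))"

definition kl_bern :: "real \<Rightarrow> real \<Rightarrow> ereal" where
  "kl_bern p q = xlogxy p q + xlogxy (1 - p) (1 - q)"

text \<open>Upper confidence index u(n) from the count N = N(n) and the sum S = S(n):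
  u = max {q in [muhat,1]. N * d(muhat,q) <= delta}, muhat = S/N, and u = 1 if N = 0.\<close>
definition kl_ucb :: "real \<Rightarrow> real \<Rightarrow> real \<Rightarrow> real" where
  "kl_ucb \<delta> N S =
     (if N = 0 then 1
      else (GREATEST q. q \<in> {S / N..1} \<and> ereal N * kl_bern (S / N) q \<le> ereal \<delta>))"

end

theory Submission
  imports Defs "HOL-Real_Asymp.Real_Asymp"
begin

(* 1. Analytic facts about the Bernoulli divergence: on the relevant range it is the real
      function Dkl; the index kl_ucb is attained (the sublevel set is compact), so
      u(n) < mu forces muhat(n) < mu and N(n) * Dkl(muhat(n), mu) > delta.
   2. Exponential tilting: on the superlevel set {p <= mu. c < Dkl p mu} one tilting
      parameter l works for all p, i.e. c <= l * p - log(1 - mu + mu * e^l).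
   3. Supermartingale: W_l(m) = exp (sum_{s<=m} eps_s (l X_s - log(1 - mu + mu e^l))) has
      expectation at most 1 (convexity of exp plus independence of X_{m+1} from F_m),
      so Markov's inequality bounds P(W_l(n) >= e^(delta-1)) by e^(1-delta).
   4. Peeling: cover [1, n] by the geometric slices [r^(k-1), r^k], r = delta/(delta-1),
      k = 1..ceil(delta log n).  On slice k a failure of the index makes W_l(n) large for
      the tilting l chosen for c = delta/r^k; a union bound over the slices gives the
      theorem (the degenerate cases delta <= 1 and mu in {0,1} are treated separately). *)

subsection \<open>The Bernoulli divergence on the finite range\<close>

text \<open>Real-valued form of the divergence, valid whenever the second argument is below 1.\<close>
definition Dkl :: "real \<Rightarrow> real \<Rightarrow> real" where
  "Dkl p q = p * ln (p / q) + (1 - p) * ln ((1 - p) / (1 - q))"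

lemma kl_bern_finite:
  assumes "0 \<le> p" "p \<le> q" "q < 1"
  shows "kl_bern p q = ereal (Dkl p q)"
proof (cases "p = 0")
  case True then show ?thesis using assms by (simp add: kl_bern_def xlogxy_def Dkl_def)
next
  case False
  then have "p > 0" using assms by auto
  then show ?thesis using assms by (simp add: kl_bern_def xlogxy_def Dkl_def)
qed

lemma kl_bern_one: assumes "0 \<le> p" "p < 1" shows "kl_bern p 1 = \<infinity>"
  using assms by (simp add: kl_bern_def xlogxy_def)

lemma kl_bern_self: assumes "0 \<le> p" "p \<le> 1" shows "kl_bern p p = 0"
  using assms by (auto simp: kl_bern_def xlogxy_def zero_ereal_def)

lemma Dkl_self: "Dkl p p = 0"
  by (simp add: Dkl_def)

text \<open>Dropping the first term costs at most 1 (from ln y <= y - 1); this keeps the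
  sublevel sets of the divergence away from 1.\<close>
lemma Dkl_lower_bound:
  assumes "0 \<le> p" "p < 1" "p \<le> q" "q < 1"
  shows "Dkl p q \<ge> (1 - p) * ln ((1 - p) / (1 - q)) - 1"
proof -
  have "p * ln (p / q) \<ge> p - q"
  proof (cases "p = 0")
    case True then show ?thesis using assms by simp
  next
    case False
    then have pq: "p > 0" "q > 0" using assms by auto
    have "ln (q / p) \<le> q / p - 1" using pq by (intro ln_le_minus_one) simp
    moreover have "ln (p / q) = - ln (q / p)" using pq by (simp add: ln_div)
    ultimately have "ln (p / q) \<ge> 1 - q / p" by simp
    then have "p * ln (p / q) \<ge> p * (1 - q / p)" using pq by (intro mult_left_mono) auto
    also have "p * (1 - q / p) = p - q" using pq by (simp add: field_simps)
    finally show ?thesis by simp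
  qed
  then show ?thesis using assms unfolding Dkl_def by simp
qed

lemma kl_sublevel_bound:
  assumes N: "N > 0" and p: "0 \<le> p" "p < 1" and q: "p \<le> q" "q \<le> 1"
    and le: "ereal N * kl_bern p q \<le> ereal \<delta>"
  shows "N * Dkl p q \<le> \<delta>" and "q \<le> 1 - (1 - p) / exp ((\<delta> / N + 1) / (1 - p))"
proof -
  have q1: "q < 1"
  proof (rule ccontr)
    assume "\<not> q < 1"
    then have "q = 1" using q by simp
    then show False using le kl_bern_one[OF p] N by simp
  qed
  have "ereal N * ereal (Dkl p q) \<le> ereal \<delta>" using le kl_bern_finite[OF p(1) q(1) q1] by simp
  then show ND: "N * Dkl p q \<le> \<delta>" by simp
  then have "Dkl p q \<le> \<delta> / N" using N by (simp add: field_simps)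
  then have "(1 - p) * ln ((1 - p) / (1 - q)) \<le> \<delta> / N + 1"
    using Dkl_lower_bound[OF p q(1) q1] by simp
  then have "ln ((1 - p) / (1 - q)) \<le> (\<delta> / N + 1) / (1 - p)" using p by (simp add: field_simps)
  then have "(1 - p) / (1 - q) \<le> exp ((\<delta> / N + 1) / (1 - p))"
    using p q1 by (metis divide_pos_pos exp_le_cancel_iff exp_ln diff_gt_0_iff_gt)
  then have "(1 - p) / exp ((\<delta> / N + 1) / (1 - p)) \<le> 1 - q" using p q1
    by (simp add: field_simps)
  then show "q \<le> 1 - (1 - p) / exp ((\<delta> / N + 1) / (1 - p))" by simp
qed

text \<open>The maximum defining the index exists: the sublevel set is a nonempty compact set.\<close>
lemma kl_ucb_attained:
  assumes N: "N > 0" and p: "0 \<le> p" "p \<le> 1" and d: "\<delta> > 0"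
  shows "\<exists>u. (u \<in> {p..1} \<and> ereal N * kl_bern p u \<le> ereal \<delta>) \<and>
     (\<forall>q. q \<in> {p..1} \<and> ereal N * kl_bern p q \<le> ereal \<delta> \<longrightarrow> q \<le> u)"
proof (cases "p = 1")
  case True
  then show ?thesis using kl_bern_self[of 1] d by (intro exI[of _ 1]) auto
next
  case False
  then have p1: "p < 1" using p by auto
  define b where "b = 1 - (1 - p) / exp ((\<delta> / N + 1) / (1 - p))"
  have b1: "b < 1" unfolding b_def using p1 by simp
  define T where "T = {q. q \<in> {p..1} \<and> ereal N * kl_bern p q \<le> ereal \<delta>}"
  have Teq: "T = {q \<in> {p..b}. N * Dkl p q \<le> \<delta>}"
  proof (intro set_eqI iffI)
    fix q assume "q \<in> T"
    then show "q \<in> {q \<in> {p..b}. N * Dkl p q \<le> \<delta>}"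
      using kl_sublevel_bound[OF N p(1) p1] unfolding T_def b_def by auto
  next
    fix q assume q: "q \<in> {q \<in> {p..b}. N * Dkl p q \<le> \<delta>}"
    then have "p \<le> q" "q < 1" using b1 by auto
    then show "q \<in> T" using q kl_bern_finite[OF p(1)] unfolding T_def by auto
  qed
  have cont: "continuous_on {p..b} (\<lambda>q. Dkl p q)"
  proof (cases "p = 0")
    case True
    have "continuous_on {p..b} (\<lambda>q. ln (1 / (1 - q)))"
      using b1 by (intro continuous_intros) auto
    then show ?thesis using True by (simp add: Dkl_def)
  next
    case False
    then show ?thesis using p p1 b1 unfolding Dkl_def by (intro continuous_intros) auto
  qed
  have "closed T" unfolding Teq
    by (intro continuous_on_closed_Collect_le cont continuous_intros closed_atLeastAtMost)
  moreover have "bounded T" unfolding Teq by (rule bounded_subset[of "{p..b}"]) auto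
  ultimately have "compact T" by (simp add: compact_eq_bounded_closed)
  moreover have "p \<in> T" unfolding T_def using p kl_bern_self[OF p] d by (auto simp: zero_ereal_def)
  ultimately obtain u where "u \<in> T" "\<forall>t\<in>T. t \<le> u" using compact_attains_sup[of T] by blast
  then show ?thesis unfolding T_def by blast
qed

lemma kl_ucb_props:
  assumes N: "N > 0" and p: "0 \<le> S / N" "S / N \<le> 1" and d: "\<delta> > 0"
  shows "S / N \<le> kl_ucb \<delta> N S"
    and "\<And>q. q \<in> {S/N..1} \<Longrightarrow> ereal N * kl_bern (S/N) q \<le> ereal \<delta> \<Longrightarrow> q \<le> kl_ucb \<delta> N S"
proof -
  obtain u where u: "u \<in> {S/N..1} \<and> ereal N * kl_bern (S/N) u \<le> ereal \<delta>"
     "\<forall>q. q \<in> {S/N..1} \<and> ereal N * kl_bern (S/N) q \<le> ereal \<delta> \<longrightarrow> q \<le> u"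
    using kl_ucb_attained[OF N p d] by blast
  have eq: "kl_ucb \<delta> N S = u" unfolding kl_ucb_def using N
    by (simp, intro Greatest_equality) (use u in auto)
  show "S / N \<le> kl_ucb \<delta> N S" using eq u by auto
  fix q assume "q \<in> {S/N..1}" "ereal N * kl_bern (S/N) q \<le> ereal \<delta>"
  then show "q \<le> kl_ucb \<delta> N S" using eq u by auto
qed

lemma kl_ucb_below:
  assumes N: "N > 0" and p: "0 \<le> S / N" "S / N \<le> 1" and d: "\<delta> > 0"
    and mu: "0 < \<mu>" "\<mu> < 1" and lt: "kl_ucb \<delta> N S < \<mu>"
  shows "S / N < \<mu>" and "\<delta> < N * Dkl (S / N) \<mu>"
proof -
  show pm: "S / N < \<mu>" using kl_ucb_props(1)[OF N p d] lt by simp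
  show "\<delta> < N * Dkl (S / N) \<mu>"
  proof (rule ccontr)
    assume "\<not> ?thesis"
    then have "ereal N * kl_bern (S/N) \<mu> \<le> ereal \<delta>"
      using kl_bern_finite[OF p(1) _ mu(2)] pm by simp
    then have "\<mu> \<le> kl_ucb \<delta> N S" using kl_ucb_props(2)[OF N p d, of \<mu>] pm mu by simp
    then show False using lt by simp
  qed
qed

subsection \<open>Exponential tilting of the divergence\<close>

lemma xlnx_continuous: assumes "a > 0" shows "continuous_on {0..a} (\<lambda>x::real. x * ln x)"
proof (clarsimp simp: continuous_on_eq_continuous_within)
  fix x :: real assume x: "0 \<le> x" "x \<le> a"
  show "continuous (at x within {0..a}) (\<lambda>x. x * ln x)"
  proof (cases "x = 0")
    case True
    have "((\<lambda>x::real. x * ln x) \<longlongrightarrow> 0) (at_right 0)" by real_asymp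
    then show ?thesis using True assms by (simp add: continuous_within at_within_Icc_at_right)
  next
    case False
    then have "isCont (\<lambda>x. x * ln x) x" by (intro continuous_intros) auto
    then show ?thesis by (rule continuous_at_imp_continuous_at_within)
  qed
qed

lemma Dkl_continuous_first:
  assumes "0 < \<mu>" "\<mu> < 1"
  shows "continuous_on {0..\<mu>} (\<lambda>p. Dkl p \<mu>)"
proof -
  have eq: "Dkl p \<mu> = (p * ln p - p * ln \<mu>) + (1 - p) * ln ((1 - p) / (1 - \<mu>))"
    if p: "p \<in> {0..\<mu>}" for p
  proof (cases "p = 0")
    case True then show ?thesis by (simp add: Dkl_def)
  next
    case False then show ?thesis using p assms by (simp add: Dkl_def ln_div right_diff_distrib)
  qed
  have "continuous_on {0..\<mu>} (\<lambda>p. (p * ln p - p * ln \<mu>) + (1 - p) * ln ((1 - p) / (1 - \<mu>)))"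
    using assms by (intro continuous_intros xlnx_continuous) auto
  then show ?thesis by (rule continuous_on_eq) (simp add: eq)
qed

lemma Dkl_tilting_identity:
  assumes "0 < z" "z < \<mu>" "\<mu> < 1"
  defines "l \<equiv> ln (z * (1 - \<mu>) / (\<mu> * (1 - z)))"
  shows "l * z - ln (1 - \<mu> + \<mu> * exp l) = Dkl z \<mu>" and "l \<le> 0"
proof -
  have pos: "z * (1 - \<mu>) / (\<mu> * (1 - z)) > 0" using assms by auto
  have el: "exp l = z * (1 - \<mu>) / (\<mu> * (1 - z))" unfolding l_def using pos by simp
  have "1 - \<mu> + \<mu> * exp l = (1 - \<mu>) / (1 - z)" unfolding el using assms by (simp add: field_simps)
  then have h1: "ln (1 - \<mu> + \<mu> * exp l) = ln (1 - \<mu>) - ln (1 - z)" using assms by (simp add: ln_div)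
  have h2: "l = ln z + ln (1 - \<mu>) - ln \<mu> - ln (1 - z)" unfolding l_def using assms
    by (simp add: ln_div ln_mult)
  have h3: "Dkl z \<mu> = z * (ln z - ln \<mu>) + (1 - z) * (ln (1 - z) - ln (1 - \<mu>))"
    using assms by (simp add: Dkl_def ln_div)
  have "l * z - ln (1 - \<mu> + \<mu> * exp l)
      = (ln z + ln (1 - \<mu>) - ln \<mu> - ln (1 - z)) * z - (ln (1 - \<mu>) - ln (1 - z))"
    using h1 h2 by simp
  also have "\<dots> = Dkl z \<mu>" unfolding h3 by (simp add: algebra_simps)
  finally show "l * z - ln (1 - \<mu> + \<mu> * exp l) = Dkl z \<mu>" .
  have "z * (1 - \<mu>) / (\<mu> * (1 - z)) \<le> 1" using assms by (simp add: field_simps mult_mono)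
  then show "l \<le> 0" unfolding l_def using pos by simp
qed

lemma Dkl_superlevel_near_zero:
  assumes mu: "0 < \<mu>" "\<mu> < 1" and c: "c < Dkl 0 \<mu>"
  shows "\<exists>q. 0 < q \<and> q \<le> \<mu> \<and> c < Dkl q \<mu>"
proof -
  have "continuous (at 0 within {0..\<mu>}) (\<lambda>p. Dkl p \<mu>)"
    using Dkl_continuous_first[OF mu] mu by (simp add: continuous_on_eq_continuous_within)
  then have "((\<lambda>p. Dkl p \<mu>) \<longlongrightarrow> Dkl 0 \<mu>) (at_right 0)"
    using mu by (simp add: continuous_within at_within_Icc_at_right)
  then have "eventually (\<lambda>p. c < Dkl p \<mu>) (at_right 0)"
    using c by (rule order_tendstoD)
  then obtain e where e: "e > 0" "\<And>p. 0 < p \<Longrightarrow> p < e \<Longrightarrow> c < Dkl p \<mu>"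
    unfolding eventually_at_right_field by auto
  show ?thesis using e mu by (intro exI[of _ "min (e / 2) \<mu>"]) auto
qed

lemma Dkl_superlevel_sup:
  assumes mu: "0 < \<mu>" "\<mu> < 1" and c: "c > 0" and ne: "P \<noteq> {}"
    and P: "P = {p \<in> {0..\<mu>}. c < Dkl p \<mu>}"
  obtains z where "0 < z" "z < \<mu>" "c \<le> Dkl z \<mu>" "\<And>p. p \<in> P \<Longrightarrow> p \<le> z"
proof -
  define z where "z = Sup P"
  have bdd: "bdd_above P" unfolding P by (rule bdd_aboveI[of _ \<mu>]) auto
  have upper: "\<And>p. p \<in> P \<Longrightarrow> p \<le> z" unfolding z_def using bdd by (intro cSup_upper)
  have clQ: "closed {p \<in> {0..\<mu>}. c \<le> Dkl p \<mu>}"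
    by (intro continuous_on_closed_Collect_le Dkl_continuous_first mu continuous_intros
        closed_atLeastAtMost)
  have "closure P \<subseteq> {p \<in> {0..\<mu>}. c \<le> Dkl p \<mu>}"
    by (rule closure_minimal[OF _ clQ]) (auto simp: P)
  moreover have "z \<in> closure P" unfolding z_def using closure_contains_Sup[OF ne bdd] .
  ultimately have z: "0 \<le> z" "z \<le> \<mu>" "c \<le> Dkl z \<mu>" by auto
  have "z \<noteq> \<mu>" using z Dkl_self[of \<mu>] c by auto
  moreover have "z \<noteq> 0"
  proof
    assume z0: "z = 0"
    obtain p0 where "p0 \<in> P" using ne by auto
    then have "p0 = 0" using upper[of p0] z0 P by auto
    with \<open>p0 \<in> P\<close> have "c < Dkl 0 \<mu>" using P by auto
    then obtain q where "0 < q" "q \<le> \<mu>" "c < Dkl q \<mu>"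
      using Dkl_superlevel_near_zero[OF mu] by blast
    then show False using upper[of q] z0 P by auto
  qed
  ultimately have "0 < z" "z < \<mu>" using z by auto
  then show ?thesis using z(3) upper by (rule that)
qed

lemma Dkl_superlevel_tilt:
  assumes mu: "0 < \<mu>" "\<mu> < 1" and c: "c > 0"
  shows "\<exists>l. \<forall>p \<in> {p \<in> {0..\<mu>}. c < Dkl p \<mu>}. c \<le> l * p - ln (1 - \<mu> + \<mu> * exp l)"
proof -
  define P where "P = {p \<in> {0..\<mu>}. c < Dkl p \<mu>}"
  have "\<exists>l. \<forall>p \<in> P. c \<le> l * p - ln (1 - \<mu> + \<mu> * exp l)"
  proof (cases "P = {}")
    case False
    obtain z where z: "0 < z" "z < \<mu>" "c \<le> Dkl z \<mu>" and upper: "\<And>p. p \<in> P \<Longrightarrow> p \<le> z"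
      using Dkl_superlevel_sup[OF mu c False P_def] by blast
    define l where "l = ln (z * (1 - \<mu>) / (\<mu> * (1 - z)))"
    have li: "l * z - ln (1 - \<mu> + \<mu> * exp l) = Dkl z \<mu>" "l \<le> 0"
      using Dkl_tilting_identity[OF z(1,2) mu(2)] unfolding l_def by auto
    show ?thesis
    proof (intro exI ballI)
      fix p assume "p \<in> P"
      then have "l * z \<le> l * p" using upper li(2) by (simp add: mult_left_mono_neg)
      then show "c \<le> l * p - ln (1 - \<mu> + \<mu> * exp l)" using li(1) z(3) by simp
    qed
  qed simp
  then show ?thesis unfolding P_def .
qed

subsection \<open>Geometric slices\<close>

lemma geometric_slice:
  fixes r x :: real
  assumes "1 \<le> x" "x \<le> r ^ K" "1 \<le> K"
  shows "\<exists>k\<in>{1..K}. r ^ (k - 1) \<le> x \<and> x \<le> r ^ k"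
  using assms
proof (induction K)
  case (Suc K)
  show ?case
  proof (cases "1 \<le> K \<and> x \<le> r ^ K")
    case True then show ?thesis using Suc by fastforce
  next
    case False
    then have "r ^ K \<le> x" using Suc.prems by (cases "K = 0") auto
    then show ?thesis using Suc.prems by (intro bexI[of _ "Suc K"]) auto
  qed
qed simp

lemma geometric_grid_reaches:
  assumes d: "\<delta> > 1" and x: "x > 0" and K: "\<delta> * ln x \<le> real K"
  shows "x \<le> (\<delta> / (\<delta> - 1)) ^ K"
proof -
  have "ln (1 - 1/\<delta>) \<le> (1 - 1/\<delta>) - 1" using d by (intro ln_le_minus_one) (simp add: field_simps)
  moreover have "ln (\<delta> / (\<delta> - 1)) = - ln (1 - 1/\<delta>)" using d by (simp add: ln_div field_simps)
  ultimately have lnr: "1 / \<delta> \<le> ln (\<delta> / (\<delta> - 1))" by simp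
  have "ln x \<le> real K * (1 / \<delta>)" using K d by (simp add: field_simps)
  also have "\<dots> \<le> real K * ln (\<delta> / (\<delta> - 1))" using lnr by (intro mult_left_mono) auto
  also have "\<dots> = ln ((\<delta> / (\<delta> - 1)) ^ K)" using d by (simp add: ln_realpow)
  finally show ?thesis using x d by (subst (asm) ln_le_cancel_iff) auto
qed

text \<open>Convexity of exp gives the Bernoulli bound on the moment generating function of a
  [0,1]-valued variable.\<close>
lemma exp_convex_01:
  fixes x :: real assumes "0 \<le> x" "x \<le> 1"
  shows "exp (l * x) \<le> 1 - x + x * exp l"
proof -
  have "exp ((1 - x) *\<^sub>R 0 + x *\<^sub>R l) \<le> (1 - x) * exp 0 + x * exp l"
    using convex_onD[OF exp_convex, of x 0 l] assms by simp
  then show ?thesis by (simp add: mult.commute)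
qed

subsection \<open>The sampling model and its exponential supermartingale\<close>

locale bandit_sampling = prob_space M for M :: "'a measure" +
  fixes X :: "nat \<Rightarrow> 'a \<Rightarrow> real" and F :: "nat \<Rightarrow> 'a measure"
    and \<epsilon> :: "nat \<Rightarrow> 'a \<Rightarrow> real" and \<mu> :: real
  assumes range01: "\<And>t \<omega>. t \<ge> 1 \<Longrightarrow> \<omega> \<in> space M \<Longrightarrow> X t \<omega> \<in> {0..1}"
    and mean: "\<And>t. t \<ge> 1 \<Longrightarrow> expectation (X t) = \<mu>"
    and sub: "\<And>t. subalgebra M (F t)"
    and incr: "\<And>s t. s \<le> t \<Longrightarrow> sets (F s) \<subseteq> sets (F t)"
    and adapted: "\<And>s t. 1 \<le> s \<Longrightarrow> s \<le> t \<Longrightarrow> X s \<in> borel_measurable (F t)"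
    and future_indep: "\<And>s t. t < s \<Longrightarrow>
          indep_set (sets (F t)) {X s -` A \<inter> space M | A. A \<in> sets borel}"
    and eps01: "\<And>t \<omega>. t \<ge> 1 \<Longrightarrow> \<omega> \<in> space M \<Longrightarrow> \<epsilon> t \<omega> \<in> {0, 1}"
    and eps_pred: "\<And>t. t \<ge> 1 \<Longrightarrow> \<epsilon> t \<in> borel_measurable (F (t - 1))"
begin

abbreviation N :: "nat \<Rightarrow> 'a \<Rightarrow> real" where "N n \<omega> \<equiv> \<Sum>s=1..n. \<epsilon> s \<omega>"
abbreviation S :: "nat \<Rightarrow> 'a \<Rightarrow> real" where "S n \<omega> \<equiv> \<Sum>s=1..n. \<epsilon> s \<omega> * X s \<omega>"

lemma measurable_filtration_mono:
  assumes "s \<le> t" "f \<in> borel_measurable (F s)" shows "f \<in> borel_measurable (F t)"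
proof (rule measurable_from_subalg[OF _ assms(2)])
  show "subalgebra (F t) (F s)" using sub[of s] sub[of t] incr[OF assms(1)]
    by (auto simp: subalgebra_def)
qed

lemma measurable_filtration: "f \<in> borel_measurable (F t) \<Longrightarrow> f \<in> borel_measurable M"
  using measurable_from_subalg[OF sub] .

lemma X_measurable: "1 \<le> s \<Longrightarrow> X s \<in> borel_measurable M"
  using measurable_filtration[OF adapted[of s s]] by simp

lemma bounded_integrable:
  fixes f :: "'a \<Rightarrow> real"
  assumes "f \<in> borel_measurable M" "\<And>\<omega>. \<omega> \<in> space M \<Longrightarrow> \<bar>f \<omega>\<bar> \<le> B"
  shows "integrable M f"
  using assms by (intro integrable_const_bound[where B=B]) (auto intro!: AE_I2)

lemma X_integrable: "1 \<le> s \<Longrightarrow> integrable M (X s)"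
  using X_measurable range01 by (intro bounded_integrable[where B=1]) fastforce+

lemma mean_01: "0 \<le> \<mu>" "\<mu> \<le> 1"
proof -
  have "expectation (X 1) \<ge> 0" using range01[of 1] by (intro integral_nonneg_AE AE_I2) auto
  then show "0 \<le> \<mu>" using mean[of 1] by simp
  have "expectation (X 1) \<le> expectation (\<lambda>_. 1)" using range01[of 1] X_integrable[of 1]
    by (intro integral_mono_AE AE_I2) auto
  then show "\<mu> \<le> 1" using mean[of 1] by (simp add: prob_space)
qed

text \<open>phi l is the log moment generating function of a Bernoulli(mu) variable.\<close>
definition \<phi> :: "real \<Rightarrow> real" where "\<phi> l = ln (1 - \<mu> + \<mu> * exp l)"

lemma exp_\<phi>: "exp (\<phi> l) = 1 - \<mu> + \<mu> * exp l"
proof -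
  have "1 - \<mu> + \<mu> * exp l > 0"
  proof (cases "\<mu> = 0")
    case False
    then have "\<mu> * exp l > 0" using mean_01 by simp
    then show ?thesis using mean_01 by (intro add_nonneg_pos) auto
  qed simp
  then show ?thesis unfolding \<phi>_def by simp
qed

lemma tilted_increment_integrable: "1 \<le> t \<Longrightarrow> integrable M (\<lambda>\<omega>. exp (l * X t \<omega> - \<phi> l))"
proof -
  assume t: "1 \<le> t"
  have "\<bar>exp (l * X t \<omega> - \<phi> l)\<bar> \<le> exp (\<bar>l\<bar> + \<bar>\<phi> l\<bar>)" if "\<omega> \<in> space M" for \<omega>
  proof -
    have "\<bar>l * X t \<omega>\<bar> \<le> \<bar>l\<bar>" using range01[OF t that] by (simp add: abs_mult mult_left_le)
    then show ?thesis by simp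
  qed
  then show ?thesis using X_measurable[OF t] by (intro bounded_integrable) auto
qed

text \<open>Each tilted increment has expectation at most 1: by convexity its moment generating
  function is dominated by that of a Bernoulli(mu) variable.\<close>
lemma tilted_increment_mean:
  assumes t: "1 \<le> t"
  shows "expectation (\<lambda>\<omega>. exp (l * X t \<omega> - \<phi> l)) \<le> 1"
proof -
  have "expectation (\<lambda>\<omega>. exp (l * X t \<omega> - \<phi> l))
      \<le> expectation (\<lambda>\<omega>. (1 - X t \<omega> + X t \<omega> * exp l) / exp (\<phi> l))"
  proof (intro integral_mono_AE tilted_increment_integrable t AE_I2)
    show "integrable M (\<lambda>\<omega>. (1 - X t \<omega> + X t \<omega> * exp l) / exp (\<phi> l))"
      using X_integrable[OF t] by auto
    fix \<omega> assume "\<omega> \<in> space M"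
    then have "exp (l * X t \<omega>) \<le> 1 - X t \<omega> + X t \<omega> * exp l"
      using range01[OF t] exp_convex_01 by auto
    then show "exp (l * X t \<omega> - \<phi> l) \<le> (1 - X t \<omega> + X t \<omega> * exp l) / exp (\<phi> l)"
      by (simp add: exp_diff divide_right_mono)
  qed
  also have "\<dots> = (1 - \<mu> + \<mu> * exp l) / exp (\<phi> l)"
    using X_integrable[OF t] mean[OF t] by (simp add: prob_space)
  also have "\<dots> = exp (\<phi> l) / exp (\<phi> l)" using exp_\<phi>[of l] by simp
  also have "\<dots> = 1" by simp
  finally show ?thesis .
qed

lemma indep_of_past:
  assumes YF: "Y \<in> borel_measurable (F t)" and ts: "t < s"
  shows "indep_var borel Y borel (X s)"
  unfolding indep_var_def indep_vars_def2
proof (intro conjI ballI)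
  fix i :: bool show "random_variable (case_bool borel borel i) (case_bool Y (X s) i)"
    using measurable_filtration[OF YF] X_measurable[of s] ts by (cases i) auto
next
  show "indep_sets (\<lambda>i. {case_bool Y (X s) i -` A \<inter> space M |A. A \<in> sets (case_bool borel borel i)}) UNIV"
  proof (rule indep_sets_mono_sets[OF future_indep[OF ts, unfolded indep_set_def]])
    fix i :: bool
    show "{case_bool Y (X s) i -` A \<inter> space M |A. A \<in> sets (case_bool borel borel i)}
        \<subseteq> case_bool (sets (F t)) {X s -` A \<inter> space M |A. A \<in> sets borel} i"
    proof (cases i)
      case True
      have "Y -` A \<inter> space M \<in> sets (F t)" if "A \<in> sets borel" for A
        using measurable_sets[OF YF that] sub[of t] by (simp add: subalgebra_def)
      then show ?thesis using True by auto
    qed auto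
  qed
qed

lemma tilted_step:
  fixes l :: real
  assumes YF: "Y \<in> borel_measurable (F m)"
    and Y: "\<And>\<omega>. \<omega> \<in> space M \<Longrightarrow> 0 \<le> Y \<omega> \<and> Y \<omega> \<le> B"
  defines "Z \<equiv> \<lambda>\<omega>. exp (l * X (Suc m) \<omega> - \<phi> l)"
  shows "integrable M (\<lambda>\<omega>. Y \<omega> * Z \<omega>)" and "expectation (\<lambda>\<omega>. Y \<omega> * Z \<omega>) \<le> expectation Y"
proof -
  have "indep_var borel (id \<circ> Y) borel ((\<lambda>x. exp (l * x - \<phi> l)) \<circ> X (Suc m))"
    by (rule indep_var_compose[OF indep_of_past[OF YF]]) auto
  then have indYZ: "indep_var borel Y borel Z" unfolding Z_def by (simp add: comp_def)
  have iY: "integrable M Y" using measurable_filtration[OF YF] Y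
    by (intro bounded_integrable[where B=B]) auto
  have iZ: "integrable M Z" unfolding Z_def by (rule tilted_increment_integrable) simp
  show "integrable M (\<lambda>\<omega>. Y \<omega> * Z \<omega>)" using indep_var_integrable[OF indYZ iY iZ] .
  have "expectation Y \<ge> 0" using Y by (intro integral_nonneg_AE AE_I2) auto
  then have "expectation Y * expectation Z \<le> expectation Y"
    using tilted_increment_mean[of "Suc m" l] unfolding Z_def by (simp add: mult_left_le)
  then show "expectation (\<lambda>\<omega>. Y \<omega> * Z \<omega>) \<le> expectation Y"
    using indep_var_lebesgue_integral[OF indYZ iY iZ] by simp
qed

definition W :: "real \<Rightarrow> nat \<Rightarrow> 'a \<Rightarrow> real" where
  "W l m \<omega> = exp (\<Sum>s=1..m. \<epsilon> s \<omega> * (l * X s \<omega> - \<phi> l))"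

lemma W_eq: "W l n \<omega> = exp (l * S n \<omega> - \<phi> l * N n \<omega>)"
proof -
  have "(\<Sum>s=1..n. \<epsilon> s \<omega> * (l * X s \<omega> - \<phi> l))
      = (\<Sum>s=1..n. l * (\<epsilon> s \<omega> * X s \<omega>) - \<phi> l * \<epsilon> s \<omega>)"
    by (simp add: algebra_simps)
  also have "\<dots> = l * S n \<omega> - \<phi> l * N n \<omega>"
    by (simp add: sum_subtractf sum_distrib_left)
  finally show ?thesis unfolding W_def by simp
qed

lemma W_measurable: "W l m \<in> borel_measurable (F m)"
proof -
  have "(\<lambda>\<omega>. \<epsilon> s \<omega> * (l * X s \<omega> - \<phi> l)) \<in> borel_measurable (F m)" if "s \<in> {1..m}" for s
  proof -
    have "\<epsilon> s \<in> borel_measurable (F m)"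
      using that by (intro measurable_filtration_mono[OF _ eps_pred]) auto
    moreover have "X s \<in> borel_measurable (F m)" using that by (intro adapted) auto
    ultimately show ?thesis by measurable
  qed
  then show ?thesis unfolding W_def by measurable
qed

lemma W_bounds: "\<omega> \<in> space M \<Longrightarrow> 0 \<le> W l m \<omega> \<and> W l m \<omega> \<le> exp (real m * (\<bar>l\<bar> + \<bar>\<phi> l\<bar>))"
proof -
  assume \<omega>: "\<omega> \<in> space M"
  have "(\<Sum>s=1..m. \<epsilon> s \<omega> * (l * X s \<omega> - \<phi> l)) \<le> of_nat (card {1..m}) * (\<bar>l\<bar> + \<bar>\<phi> l\<bar>)"
  proof (rule sum_bounded_above)
    fix s assume s: "s \<in> {1..m}"
    have e: "\<epsilon> s \<omega> \<in> {0,1}" using eps01 s \<omega> by auto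
    have "\<bar>l * X s \<omega>\<bar> \<le> \<bar>l\<bar>" using range01[OF _ \<omega>, of s] s by (simp add: abs_mult mult_left_le)
    then show "\<epsilon> s \<omega> * (l * X s \<omega> - \<phi> l) \<le> \<bar>l\<bar> + \<bar>\<phi> l\<bar>" using e by auto
  qed
  then show ?thesis unfolding W_def by simp
qed

text \<open>W_l is a nonnegative supermartingale started at 1, so its expectation stays at most 1.\<close>
lemma W_mean: "expectation (W l m) \<le> 1"
proof (induction m)
  case 0
  then show ?case by (simp add: W_def prob_space)
next
  case (Suc m)
  define e where "e = \<epsilon> (Suc m)"
  define Z where "Z = (\<lambda>\<omega>. exp (l * X (Suc m) \<omega> - \<phi> l))"
  define B where "B = exp (real m * (\<bar>l\<bar> + \<bar>\<phi> l\<bar>))"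
  have eF: "e \<in> borel_measurable (F m)" unfolding e_def using eps_pred[of "Suc m"] by simp
  have e01: "\<And>\<omega>. \<omega> \<in> space M \<Longrightarrow> e \<omega> \<in> {0,1}" unfolding e_def using eps01 by auto
  have Wb: "\<And>\<omega>. \<omega> \<in> space M \<Longrightarrow> 0 \<le> W l m \<omega> \<and> W l m \<omega> \<le> B"
    unfolding B_def using W_bounds by blast
  have YF: "(\<lambda>\<omega>. W l m \<omega> * e \<omega>) \<in> borel_measurable (F m)"
    using W_measurable eF by measurable
  have Yb: "0 \<le> W l m \<omega> * e \<omega> \<and> W l m \<omega> * e \<omega> \<le> B" if "\<omega> \<in> space M" for \<omega>
    using Wb[OF that] e01[OF that] by auto
  have step: "integrable M (\<lambda>\<omega>. W l m \<omega> * e \<omega> * Z \<omega>)"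
    "expectation (\<lambda>\<omega>. W l m \<omega> * e \<omega> * Z \<omega>) \<le> expectation (\<lambda>\<omega>. W l m \<omega> * e \<omega>)"
    unfolding Z_def using tilted_step[where l=l, OF YF Yb] by simp_all
  have WM: "W l m \<in> borel_measurable M" and eM: "e \<in> borel_measurable M"
    using measurable_filtration W_measurable eF by auto
  have iW1: "integrable M (\<lambda>\<omega>. W l m \<omega> * (1 - e \<omega>))"
  proof (rule bounded_integrable[where B=B])
    show "(\<lambda>\<omega>. W l m \<omega> * (1 - e \<omega>)) \<in> borel_measurable M" using WM eM by measurable
    show "\<bar>W l m \<omega> * (1 - e \<omega>)\<bar> \<le> B" if "\<omega> \<in> space M" for \<omega>
      using Wb[OF that] e01[OF that] by auto
  qed
  have iW2: "integrable M (\<lambda>\<omega>. W l m \<omega> * e \<omega>)"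
    using WM eM Yb by (intro bounded_integrable[where B=B]) auto
  have "expectation (W l (Suc m)) = expectation (\<lambda>\<omega>. W l m \<omega> * (1 - e \<omega>) + W l m \<omega> * e \<omega> * Z \<omega>)"
  proof (rule Bochner_Integration.integral_cong[OF refl])
    fix \<omega> assume \<omega>: "\<omega> \<in> space M"
    have "W l (Suc m) \<omega> = W l m \<omega> * exp (e \<omega> * (l * X (Suc m) \<omega> - \<phi> l))"
      unfolding W_def e_def by (simp add: exp_add)
    then show "W l (Suc m) \<omega> = W l m \<omega> * (1 - e \<omega>) + W l m \<omega> * e \<omega> * Z \<omega>"
      using e01[OF \<omega>] unfolding Z_def by auto
  qed
  also have "\<dots> \<le> expectation (\<lambda>\<omega>. W l m \<omega> * (1 - e \<omega>)) + expectation (\<lambda>\<omega>. W l m \<omega> * e \<omega>)"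
    using iW1 iW2 step by simp
  also have "\<dots> = expectation (W l m)"
    using iW1 iW2 by (simp flip: Bochner_Integration.integral_add add: algebra_simps)
  also have "\<dots> \<le> 1" by (rule Suc.IH)
  finally show ?case .
qed

lemma W_integrable: "integrable M (W l m)"
  using measurable_filtration[OF W_measurable] W_bounds
  by (intro bounded_integrable[where B="exp (real m * (\<bar>l\<bar> + \<bar>\<phi> l\<bar>))"]) auto

lemma W_markov:
  assumes "a > 0"
  shows "measure M {\<omega> \<in> space M. a \<le> W l m \<omega>} \<le> 1 / a"
proof -
  have "measure M {\<omega> \<in> space M. a \<le> W l m \<omega>} \<le> expectation (W l m) / a"
    using W_bounds
    by (intro integral_Markov_inequality_measure[OF W_integrable _ _ assms, of "space M"])
       (auto intro: AE_I2)
  also have "\<dots> \<le> 1 / a" using W_mean assms by (simp add: divide_right_mono)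
  finally show ?thesis .
qed

subsection \<open>Failure of the index\<close>

definition ucb_fails :: "real \<Rightarrow> nat \<Rightarrow> 'a set" where
  "ucb_fails \<delta> n = {\<omega> \<in> space M. kl_ucb \<delta> (N n \<omega>) (S n \<omega>) < \<mu>}"

lemma sample_bounds:
  assumes \<omega>: "\<omega> \<in> space M"
  shows "0 \<le> S n \<omega>" "S n \<omega> \<le> N n \<omega>" "N n \<omega> \<le> real n" "N n \<omega> \<noteq> 0 \<Longrightarrow> 1 \<le> N n \<omega>"
proof -
  have e: "\<And>s. s \<in> {1..n} \<Longrightarrow> \<epsilon> s \<omega> \<in> {0,1}" using eps01 \<omega> by auto
  have x: "\<And>s. s \<in> {1..n} \<Longrightarrow> X s \<omega> \<in> {0..1}" using range01 \<omega> by auto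
  show "0 \<le> S n \<omega>" using e x by (intro sum_nonneg) fastforce
  show "S n \<omega> \<le> N n \<omega>" using e x by (intro sum_mono) fastforce
  have "N n \<omega> \<le> of_nat (card {1..n}) * 1" using e by (intro sum_bounded_above) fastforce
  then show "N n \<omega> \<le> real n" by simp
  assume "N n \<omega> \<noteq> 0"
  then obtain s where s: "s \<in> {1..n}" "\<epsilon> s \<omega> \<noteq> 0" by (metis (no_types, lifting) sum.neutral)
  then have "\<epsilon> s \<omega> = 1" using e by auto
  moreover have "\<epsilon> s \<omega> \<le> N n \<omega>" using s e by (intro member_le_sum) fastforce+
  ultimately show "1 \<le> N n \<omega>" by simp
qed

lemma empirical_mean_01:
  assumes "\<omega> \<in> space M" "N n \<omega> \<noteq> 0"
  shows "N n \<omega> > 0" "0 \<le> S n \<omega> / N n \<omega>" "S n \<omega> / N n \<omega> \<le> 1"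
  using sample_bounds[OF assms(1), of n] assms(2) by (auto simp: divide_le_eq)

lemma kl_ucb_nonneg:
  assumes \<omega>: "\<omega> \<in> space M" and d: "\<delta> > 0"
  shows "0 \<le> kl_ucb \<delta> (N n \<omega>) (S n \<omega>)"
proof (cases "N n \<omega> = 0")
  case True then show ?thesis by (simp add: kl_ucb_def)
next
  case False
  show ?thesis using kl_ucb_props(1)[OF empirical_mean_01[OF \<omega> False] d]
    empirical_mean_01[OF \<omega> False] by linarith
qed

lemma ucb_fails_deviation:
  assumes \<omega>: "\<omega> \<in> ucb_fails \<delta> n" and d: "\<delta> > 0" and mu: "0 < \<mu>" "\<mu> < 1"
  shows "\<omega> \<in> space M" "1 \<le> N n \<omega>" "N n \<omega> \<le> real n"
    "S n \<omega> / N n \<omega> < \<mu>" "\<delta> < N n \<omega> * Dkl (S n \<omega> / N n \<omega>) \<mu>"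
proof -
  have \<omega>M: "\<omega> \<in> space M" and lt: "kl_ucb \<delta> (N n \<omega>) (S n \<omega>) < \<mu>"
    using \<omega> unfolding ucb_fails_def by auto
  have N0: "N n \<omega> \<noteq> 0" using lt mu by (auto simp: kl_ucb_def)
  show "\<omega> \<in> space M" "1 \<le> N n \<omega>" "N n \<omega> \<le> real n" using \<omega>M sample_bounds[OF \<omega>M] N0 by auto
  show "S n \<omega> / N n \<omega> < \<mu>" "\<delta> < N n \<omega> * Dkl (S n \<omega> / N n \<omega>) \<mu>"
    using kl_ucb_below[OF empirical_mean_01[OF \<omega>M N0] d mu lt] by auto
qed

definition tilt :: "real \<Rightarrow> real" where
  "tilt c = (SOME l. \<forall>p \<in> {p \<in> {0..\<mu>}. c < Dkl p \<mu>}. c \<le> l * p - \<phi> l)"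

lemma tilt_bound:
  assumes mu: "0 < \<mu>" "\<mu> < 1" and c: "c > 0" and p: "0 \<le> p" "p \<le> \<mu>" "c < Dkl p \<mu>"
  shows "c \<le> tilt c * p - \<phi> (tilt c)"
proof -
  have "\<exists>l. \<forall>p \<in> {p \<in> {0..\<mu>}. c < Dkl p \<mu>}. c \<le> l * p - \<phi> l"
    using Dkl_superlevel_tilt[OF mu c] unfolding \<phi>_def .
  then have "\<forall>p \<in> {p \<in> {0..\<mu>}. c < Dkl p \<mu>}. c \<le> tilt c * p - \<phi> (tilt c)"
    unfolding tilt_def by (rule someI_ex)
  then show ?thesis using p by auto
qed

lemma ucb_fails_slice:
  assumes mu: "0 < \<mu>" "\<mu> < 1" and d: "\<delta> > 1" and \<omega>: "\<omega> \<in> ucb_fails \<delta> n"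
    and r: "r = \<delta> / (\<delta> - 1)" and k: "1 \<le> k" "r ^ (k - 1) \<le> N n \<omega>" "N n \<omega> \<le> r ^ k"
  shows "exp (\<delta> - 1) \<le> W (tilt (\<delta> / r ^ k)) n \<omega>"
proof -
  define c where "c = \<delta> / r ^ k"
  define p where "p = S n \<omega> / N n \<omega>"
  have d0: "\<delta> > 0" using d by simp
  note dev = ucb_fails_deviation[OF \<omega> d0 mu]
  have r1: "r > 1" using d r by simp
  have N: "N n \<omega> > 0" and c0: "c > 0" using dev d r1 unfolding c_def by auto
  have "c \<le> \<delta> / N n \<omega>" unfolding c_def using k(3) N d by (intro divide_left_mono) auto
  also have "\<delta> / N n \<omega> < Dkl p \<mu>" using dev d N unfolding p_def by (simp add: divide_less_eq mult.commute)
  finally have cp: "c < Dkl p \<mu>" .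
  have "0 \<le> p" "p \<le> \<mu>" using empirical_mean_01[OF dev(1)] dev(4) N unfolding p_def by auto
  then have lk: "c \<le> tilt c * p - \<phi> (tilt c)" by (rule tilt_bound[OF mu c0 _ _ cp])
  have "r ^ k = r * r ^ (k - 1)" using k(1) by (cases k) auto
  then have "\<delta> - 1 = r ^ (k - 1) * c" unfolding c_def r using d by (simp add: field_simps)
  also have "\<dots> \<le> N n \<omega> * (tilt c * p - \<phi> (tilt c))" using k(2) lk c0 N by (intro mult_mono) auto
  also have "\<dots> = tilt c * S n \<omega> - \<phi> (tilt c) * N n \<omega>" unfolding p_def using N by (simp add: field_simps)
  finally show ?thesis unfolding W_eq c_def by simp
qed

text \<open>Union bound over the K geometric slices covering [1, n].\<close>
lemma ucb_fails_nondegenerate: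
  assumes mu: "0 < \<mu>" "\<mu> < 1" and d: "\<delta> > 1" and K: "1 \<le> K" "\<delta> * ln (real n) \<le> real K"
  shows "measure M (ucb_fails \<delta> n) \<le> real K * exp (1 - \<delta>)"
proof -
  define r where "r = \<delta> / (\<delta> - 1)"
  define B where "B k = {\<omega> \<in> space M. exp (\<delta> - 1) \<le> W (tilt (\<delta> / r ^ k)) n \<omega>}" for k
  have Bsets: "B k \<in> sets M" for k
    unfolding B_def using measurable_filtration[OF W_measurable] by measurable
  have cover: "ucb_fails \<delta> n \<subseteq> (\<Union>k\<in>{1..K}. B k)"
  proof
    fix \<omega> assume \<omega>: "\<omega> \<in> ucb_fails \<delta> n"
    have d0: "\<delta> > 0" using d by simp
    note dev = ucb_fails_deviation[OF \<omega> d0 mu]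
    have "real n \<le> r ^ K" unfolding r_def using geometric_grid_reaches[OF d _ K(2)] dev by simp
    then obtain k where k: "k \<in> {1..K}" "r ^ (k - 1) \<le> N n \<omega>" "N n \<omega> \<le> r ^ k"
      using geometric_slice[of "N n \<omega>" r K] dev K(1) by auto
    then have "exp (\<delta> - 1) \<le> W (tilt (\<delta> / r ^ k)) n \<omega>"
      using ucb_fails_slice[OF mu d \<omega> r_def] by auto
    then show "\<omega> \<in> (\<Union>k\<in>{1..K}. B k)" using k(1) dev(1) unfolding B_def by auto
  qed
  have "measure M (ucb_fails \<delta> n) \<le> measure M (\<Union>k\<in>{1..K}. B k)"
    using cover Bsets by (intro finite_measure_mono) auto
  also have "\<dots> \<le> (\<Sum>k\<in>{1..K}. measure M (B k))"
    using Bsets by (intro measure_UNION_le) auto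
  also have "\<dots> \<le> (\<Sum>k\<in>{1..K}. exp (1 - \<delta>))"
    using W_markov[of "exp (\<delta> - 1)"] unfolding B_def by (intro sum_mono) (simp add: exp_diff)
  finally show ?thesis by simp
qed

lemma ucb_fails_mean_zero:
  assumes "\<mu> = 0" "\<delta> > 0" shows "ucb_fails \<delta> n = {}"
proof -
  have "\<not> kl_ucb \<delta> (N n \<omega>) (S n \<omega>) < 0" if "\<omega> \<in> space M" for \<omega>
    using kl_ucb_nonneg[OF that assms(2), of n] by simp
  then show ?thesis using assms(1) unfolding ucb_fails_def by auto
qed

lemma rewards_one_ae:
  assumes "\<mu> = 1" shows "AE \<omega> in M. \<forall>s\<in>{1..n}. X s \<omega> = 1"
proof (rule AE_finite_allI)
  fix s :: nat assume "s \<in> {1..n}"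
  then have s: "1 \<le> s" by simp
  have i: "integrable M (\<lambda>\<omega>. 1 - X s \<omega>)" using X_integrable[OF s] by simp
  have "expectation (\<lambda>\<omega>. 1 - X s \<omega>) = 0"
    using X_integrable[OF s] mean[OF s] assms by (simp add: prob_space)
  then have "AE \<omega> in M. 1 - X s \<omega> = 0"
    using integral_nonneg_eq_0_iff_AE[OF i] range01[OF s] by (auto intro!: AE_I2)
  then show "AE \<omega> in M. X s \<omega> = 1" by auto
qed simp

lemma ucb_fails_mean_one:
  assumes mu: "\<mu> = 1" and d: "\<delta> > 0"
  shows "measure M (ucb_fails \<delta> n) = 0"
proof -
  obtain Z where Z: "{\<omega> \<in> space M. \<not> (\<forall>s\<in>{1..n}. X s \<omega> = 1)} \<subseteq> Z" "emeasure M Z = 0" "Z \<in> sets M"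
    using rewards_one_ae[OF mu] by (rule AE_E)
  have "ucb_fails \<delta> n \<subseteq> Z"
  proof
    fix \<omega> assume "\<omega> \<in> ucb_fails \<delta> n"
    then have \<omega>M: "\<omega> \<in> space M" and lt: "kl_ucb \<delta> (N n \<omega>) (S n \<omega>) < 1"
      using mu unfolding ucb_fails_def by auto
    have "\<not> (\<forall>s\<in>{1..n}. X s \<omega> = 1)"
    proof
      assume "\<forall>s\<in>{1..n}. X s \<omega> = 1"
      then have SN: "S n \<omega> = N n \<omega>" by (intro sum.cong) auto
      have N0: "N n \<omega> \<noteq> 0" using lt by (auto simp: kl_ucb_def)
      show False using kl_ucb_props(1)[OF empirical_mean_01[OF \<omega>M N0] d] SN N0 lt by simp
    qed
    then show "\<omega> \<in> Z" using Z(1) \<omega>M by auto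
  qed
  then have "measure M (ucb_fails \<delta> n) \<le> measure M Z" using Z(3) by (rule finite_measure_mono)
  moreover have "measure M Z = 0" using Z(2) by (simp add: measure_def)
  ultimately show ?thesis using measure_nonneg[of M "ucb_fails \<delta> n"] by linarith
qed

lemma ucb_fails_bound:
  assumes d: "\<delta> > 0" and n: "n \<ge> 2"
  shows "measure M (ucb_fails \<delta> n) \<le> exp 1 * real_of_int \<lceil>\<delta> * ln (real n)\<rceil> * exp (- \<delta>)"
proof -
  define K where "K = nat \<lceil>\<delta> * ln (real n)\<rceil>"
  have "\<delta> * ln (real n) > 0" using n d by simp
  then have Kreal: "real K = real_of_int \<lceil>\<delta> * ln (real n)\<rceil>" and K: "1 \<le> K"
    unfolding K_def by (simp_all add: le_nat_iff)
  have Kge: "\<delta> * ln (real n) \<le> real K" unfolding Kreal by (rule le_of_int_ceiling)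
  have "exp 1 * real_of_int \<lceil>\<delta> * ln (real n)\<rceil> * exp (- \<delta>) = real K * exp (1 - \<delta>)"
    using Kreal by (simp add: exp_diff exp_minus field_simps)
  moreover consider "\<delta> \<le> 1" | "\<mu> = 0" | "\<mu> = 1" | "1 < \<delta>" "0 < \<mu>" "\<mu> < 1"
    using mean_01 by linarith
  then have "measure M (ucb_fails \<delta> n) \<le> real K * exp (1 - \<delta>)"
  proof cases
    case 1
    have "measure M (ucb_fails \<delta> n) \<le> 1" by (rule prob_le_1)
    also have "1 \<le> exp (1 - \<delta>)" using 1 by simp
    also have "\<dots> \<le> real K * exp (1 - \<delta>)" using K by simp
    finally show ?thesis .
  next
    case 2 then show ?thesis using ucb_fails_mean_zero d by simp
  next
    case 3 then show ?thesis using ucb_fails_mean_one d by simp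
  next
    case 4 show ?thesis by (rule ucb_fails_nondegenerate[OF 4(2,3,1) K Kge])
  qed
  ultimately show ?thesis by simp
qed

end

theorem theorem3:
  fixes M :: "'a measure" and X :: "nat \<Rightarrow> 'a \<Rightarrow> real" and F :: "nat \<Rightarrow> 'a measure"
    and \<epsilon> :: "nat \<Rightarrow> 'a \<Rightarrow> real" and \<mu> \<delta> :: real and n :: nat
  assumes "prob_space M"
    and indep: "prob_space.indep_vars M (\<lambda>_. borel) X {1..}"
    and range01: "\<And>t \<omega>. t \<ge> 1 \<Longrightarrow> \<omega> \<in> space M \<Longrightarrow> X t \<omega> \<in> {0..1}"
    and mean: "\<And>t. t \<ge> 1 \<Longrightarrow> prob_space.expectation M (X t) = \<mu>"
    and sub: "\<And>t. subalgebra M (F t)"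
    and incr: "\<And>s t. s \<le> t \<Longrightarrow> sets (F s) \<subseteq> sets (F t)"
    and adapted: "\<And>s t. 1 \<le> s \<Longrightarrow> s \<le> t \<Longrightarrow> X s \<in> borel_measurable (F t)"
    and future_indep: "\<And>s t. t < s \<Longrightarrow>
          prob_space.indep_set M (sets (F t)) {X s -` A \<inter> space M | A. A \<in> sets borel}"
    and eps01: "\<And>t \<omega>. t \<ge> 1 \<Longrightarrow> \<omega> \<in> space M \<Longrightarrow> \<epsilon> t \<omega> \<in> {0, 1}"
    and eps_pred: "\<And>t. t \<ge> 1 \<Longrightarrow> \<epsilon> t \<in> borel_measurable (F (t - 1))"
    and "\<delta> > 0" and "n \<ge> 2"
  shows "measure M {\<omega> \<in> space M.
            kl_ucb \<delta> (\<Sum>s=1..n. \<epsilon> s \<omega>) (\<Sum>s=1..n. \<epsilon> s \<omega> * X s \<omega>) < \<mu>}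
         \<le> exp 1 * real_of_int \<lceil>\<delta> * ln (real n)\<rceil> * exp (- \<delta>)"
proof -
  interpret bandit_sampling M X F \<epsilon> \<mu>
    by (intro bandit_sampling.intro bandit_sampling_axioms.intro) (use assms in auto)
  show ?thesis using ucb_fails_bound[OF \<open>\<delta> > 0\<close> \<open>n \<ge> 2\<close>] unfolding ucb_fails_def .
qed

end
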